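(* Let $(N,v)$ be a transferable utility game with $N=\{1,\dots,n\}$ and $\Pi(v)\neq\emptyset$, and let $\delta>0$ be such that every value $v(S)$, $S\subseteq N$, is an integer multiple of $\delta$ and there exists $(\mathbf{x},\rho)\in\Pi(v)$ with every $x_i$ an integer multiple of $\delta$. Run the Coalition Proposal algorithm (described in the context) on $(N,v)$ with step $\delta$ for infinitely many iterations. Then, with probability $1$, the environment state $(\mathbf{a},\mathcal{C})$ converges to (i.e., eventually becomes and remains equal to) some state $(\mathbf{x},\rho)\in\Pi(v)$.
   Context: A transferable utility (TU) game is a pair $(N,v)$ with $N=\{1,\dots,n\}$ and $v:2^N\to\mathbb{R}$, $v(\emptyset)=0$. An allocation is $\mathbf{x}\in\mathbb{R}^n$. $\mathcal{P}(N)$ denotes the set of partitions of $N$. A core solution is a pair $(\mathbf{x},\rho)$ with $\mathbf{x}\in\mathbb{R}^n$, $\rho\in\mathcal{P}(N)$, such that $\sum_{i\in S}x_i\ge v(S)$ for all $S\subseteq N$ and $\sum_{i\in S}x_i=v(S)$ for all $S\in\rho$; $\Pi(v)$ is the set of core solutions. Coalition Proposal algorithm with step $\delta$: each player $i$ holds an aspiration $a_i$ and a coalition state $C_i\subseteq N$. Initially $a_i$ is an arbitrary integer multiple of $\delta$ and $C_i=\emptyset$. In each iteration: a player $i\in N$ is activated at random; $i$ chooses at random a set $S\subseteq N\setminus\{i\}$ and proposes $J=S\cup\{i\}$ (the random choices are made independently across iterations, every player and every subset having positive probability). If $\sum_{j\in J}a_j+\delta\le v(J)$ (success): $a_i\leftarrow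 a_i+\delta$; then for every $j\in J$ and every $k\in C_j$ with $k\neq j$, set $C_k\leftarrow\emptyset$; then set $C_j\leftarrow J$ for all $j\in J$. Otherwise (failure): if $C_i=\emptyset$, set $a_i\leftarrow\max(v(\{i\}),a_i-\delta)$. Finally, if $a_i=v(\{i\})$ and $C_i=\emptyset$, set $C_i\leftarrow\{i\}$. The environment state at an iteration is $(\mathbf{a},\mathcal{C})$, where $\mathbf{a}=(a_1,\dots,a_n)$ and $\mathcal{C}=\{C_i:i\in N\}$ is the set of (nonempty) formed coalitions. *)

theory Defs
  imports "HOL-Probability.Probability" "HOL-Library.Disjoint_Sets"
begin

text \<open>Players are N = {1..n}. A game is v :: nat set => real (values outside
subsets of N are irrelevant). Allocations x :: nat => real (only x i, i in N, matter).\<close>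

definition players :: "nat \<Rightarrow> nat set" where
  "players n = {1..n}"

definition is_mult :: "real \<Rightarrow> real \<Rightarrow> bool" where
  "is_mult \<delta> r \<longleftrightarrow> (\<exists>k::int. r = of_int k * \<delta>)"

definition core_solution :: "nat \<Rightarrow> (nat set \<Rightarrow> real) \<Rightarrow> (nat \<Rightarrow> real) \<Rightarrow> nat set set \<Rightarrow> bool" where
  "core_solution n v x \<rho> \<longleftrightarrow>
     partition_on (players n) \<rho> \<and>
     (\<forall>S. S \<subseteq> players n \<longrightarrow> (\<Sum>i\<in>S. x i) \<ge> v S) \<and>
     (\<forall>S\<in>\<rho>. (\<Sum>i\<in>S. x i) = v S)"

text \<open>Algorithm state: aspirations a and coalition states C.\<close>
type_synonym cp_state = "(nat \<Rightarrow> real) \<times> (nat \<Rightarrow> nat set)"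

text \<open>On success, the clearing step
 "for every j in J and every k in C_j with k \<noteq> j, set C_k := {}" is read
 using the coalition states before the iteration, followed by C_j := J for j in J.\<close>
definition cp_step :: "(nat set \<Rightarrow> real) \<Rightarrow> real \<Rightarrow> cp_state \<Rightarrow> nat \<times> nat set \<Rightarrow> cp_state" where
  "cp_step v \<delta> st choice =
     (let (a, C) = st; (i, S) = choice; J = S \<union> {i};
          (a', C') =
            (if (\<Sum>j\<in>J. a j) + \<delta> \<le> v J then
               (a(i := a i + \<delta>),
                (\<lambda>k. if k \<in> J then J
                     else if (\<exists>j\<in>J. k \<in> C j \<and> k \<noteq> j) then {}
                     else C k))
             else
               (if C i = {} then a(i := max (v {i}) (a i - \<delta>)) else a, C))
      in (a', if a' i = v {i} \<and> C' i = {} then C'(i := {i}) else C'))"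

fun cp_run :: "(nat set \<Rightarrow> real) \<Rightarrow> real \<Rightarrow> (nat \<Rightarrow> real) \<Rightarrow> (nat \<times> nat set) stream \<Rightarrow> nat \<Rightarrow> cp_state" where
  "cp_run v \<delta> a0 \<omega> 0 = (a0, \<lambda>_. {})"
| "cp_run v \<delta> a0 \<omega> (Suc t) = cp_step v \<delta> (cp_run v \<delta> a0 \<omega> t) (\<omega> !! t)"

definition env_state_eq :: "nat \<Rightarrow> cp_state \<Rightarrow> (nat \<Rightarrow> real) \<Rightarrow> nat set set \<Rightarrow> bool" where
  "env_state_eq n st x \<rho> \<longleftrightarrow>
     (\<forall>i\<in>players n. fst st i = x i) \<and>
     {snd st i | i. i \<in> players n \<and> snd st i \<noteq> {}} = \<rho>"

end

theory Submission
  imports Defs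
begin

text \<open>
  With aspirations on the \<delta>-grid between fixed bounds, the states reachable by the algorithm
  form a finite set. The states in which every player belongs to a coalition and the aspirations
  lie in the core are absorbing, and they are core solutions. It therefore suffices that from every
  reachable state some absorbing state can be reached: a single finite word of proposals then
  drives every reachable state into an absorbing one, and with probability 1 this word eventually
  occurs in the i.i.d. stream of proposals.

  Reachability uses a core solution (x, \<rho>) on the \<delta>-grid. While some unattached player aspires
  to more than x, or some coalition can afford to raise a member who aspires to less than x, one
  proposal moves the aspirations closer to x by \<delta> in L1-distance. Otherwise the aspirations form
  a core allocation supported by \<rho>, and the blocks of \<rho> can be formed one at a time without
  changing them.
\<close>

lemma is_mult_add: "is_mult d x \<Longrightarrow> is_mult d y \<Longrightarrow> is_mult d (x + y)"
  unfolding is_mult_def by (metis distrib_right of_int_add)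

lemma is_mult_diff: "is_mult d x \<Longrightarrow> is_mult d y \<Longrightarrow> is_mult d (x - y)"
  unfolding is_mult_def by (metis left_diff_distrib of_int_diff)

lemma is_mult_self: "is_mult d d"
  unfolding is_mult_def by (metis mult_1 of_int_1)

lemma is_mult_sum: "(\<And>i. i \<in> A \<Longrightarrow> is_mult d (f i)) \<Longrightarrow> is_mult d (\<Sum>i\<in>A. f i)"
proof (induction A rule: infinite_finite_induct)
  case (insert i A)
  then show ?case by (simp add: is_mult_add)
qed (auto simp: is_mult_def)

lemma is_mult_less_imp_add_le:
  assumes "d > 0" "is_mult d x" "is_mult d y" "x < y"
  shows "x + d \<le> y"
proof -
  obtain k l :: int where x: "x = of_int k * d" and y: "y = of_int l * d"
    using assms(2,3) unfolding is_mult_def by blast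
  have "k < l" using assms(1,4) x y by (simp add: mult_less_cancel_right)
  then have "(of_int k + 1) * d \<le> of_int l * d"
    using assms(1) by (intro mult_right_mono) linarith+
  then show ?thesis using x y by (simp add: algebra_simps)
qed

lemma finite_is_mult_interval:
  assumes "d > 0"
  shows "finite {r. is_mult d r \<and> l \<le> r \<and> r \<le> u}"
proof (rule finite_subset)
  show "{r. is_mult d r \<and> l \<le> r \<and> r \<le> u} \<subseteq> (\<lambda>k. of_int k * d) ` {\<lceil>l / d\<rceil>..\<lfloor>u / d\<rfloor>}"
  proof
    fix r assume "r \<in> {r. is_mult d r \<and> l \<le> r \<and> r \<le> u}"
    then obtain k where "r = of_int k * d" "l \<le> of_int k * d" "of_int k * d \<le> u"
      unfolding is_mult_def by blast
    with assms show "r \<in> (\<lambda>k. of_int k * d) ` {\<lceil>l / d\<rceil>..\<lfloor>u / d\<rfloor>}"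
      by (auto simp: ceiling_le_iff le_floor_iff pos_divide_le_eq pos_le_divide_eq)
  qed
qed simp

lemma finite_funs_fixed_outside:
  assumes "finite A" "\<And>i. i \<in> A \<Longrightarrow> finite (B i)"
  shows "finite {f. (\<forall>i\<in>A. f i \<in> B i) \<and> (\<forall>i. i \<notin> A \<longrightarrow> f i = g i)}" (is "finite ?F")
proof (rule finite_imageD)
  show "inj_on (\<lambda>f. restrict f A) ?F"
    by (rule inj_onI) (simp add: fun_eq_iff restrict_def, metis)
  have "(\<lambda>f. restrict f A) ` ?F \<subseteq> PiE A B" by auto
  then show "finite ((\<lambda>f. restrict f A) ` ?F)"
    using assms by (meson finite_PiE finite_subset)
qed

lemma sum_fun_upd:
  fixes f :: "'a \<Rightarrow> 'b::ab_group_add"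
  assumes "finite A"
  shows "(\<Sum>j\<in>A. (f(i := y)) j) = (\<Sum>j\<in>A. f j) + (if i \<in> A then y - f i else 0)"
proof (cases "i \<in> A")
  case True
  have "(\<Sum>j\<in>A - {i}. (f(i := y)) j) = (\<Sum>j\<in>A - {i}. f j)" by (rule sum.cong) auto
  then show ?thesis using True assms by (simp add: sum.remove)
next
  case False
  then show ?thesis by (auto intro: sum.cong)
qed

lemma sum_abs_diff_fun_upd:
  fixes a x :: "'a \<Rightarrow> real"
  assumes "finite P" "k \<in> P" "\<bar>y - x k\<bar> = \<bar>a k - x k\<bar> - d"
  shows "(\<Sum>i\<in>P. \<bar>(a(k := y)) i - x i\<bar>) = (\<Sum>i\<in>P. \<bar>a i - x i\<bar>) - d"
proof -
  have "(\<lambda>i. \<bar>(a(k := y)) i - x i\<bar>) = (\<lambda>i. \<bar>a i - x i\<bar>)(k := \<bar>y - x k\<bar>)" by auto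
  then show ?thesis
    using assms by (simp only: sum_fun_upd[OF assms(1)]) simp
qed

section \<open>The core of a TU game\<close>

definition in_core :: "nat \<Rightarrow> (nat set \<Rightarrow> real) \<Rightarrow> (nat \<Rightarrow> real) \<Rightarrow> bool" where
  "in_core n v x \<longleftrightarrow> (\<forall>S. S \<subseteq> players n \<longrightarrow> v S \<le> (\<Sum>i\<in>S. x i))"

lemma finite_players [simp]: "finite (players n)"
  by (simp add: players_def)

lemma core_solution_in_core: "core_solution n v x \<rho> \<Longrightarrow> in_core n v x"
  by (simp add: core_solution_def in_core_def)

lemma in_core_singleton:
  assumes "in_core n v x" "k \<in> players n"
  shows "v {k} \<le> x k"
proof -
  have "v {k} \<le> (\<Sum>i\<in>{k}. x i)" using assms unfolding in_core_def by blast
  then show ?thesis by simp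
qed

lemma in_core_if_no_raise:
  assumes x: "in_core n v x"
    and no_raise: "\<forall>T i. T \<subseteq> players n \<longrightarrow> i \<in> T \<longrightarrow> a i < x i \<longrightarrow> v T \<le> (\<Sum>j\<in>T. a j)"
  shows "in_core n v a"
  unfolding in_core_def
proof (intro allI impI)
  fix T assume T: "T \<subseteq> players n"
  show "v T \<le> (\<Sum>j\<in>T. a j)"
  proof (cases "\<exists>i\<in>T. a i < x i")
    case True
    with no_raise T show ?thesis by blast
  next
    case False
    then have "(\<Sum>j\<in>T. x j) \<le> (\<Sum>j\<in>T. a j)" by (intro sum_mono) (simp add: not_less)
    moreover have "v T \<le> (\<Sum>j\<in>T. x j)" using x T unfolding in_core_def by blast
    ultimately show ?thesis by linarith
  qed
qed

lemma core_solution_if_total_le: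
  assumes x: "core_solution n v x \<rho>" and a: "in_core n v a"
    and total: "(\<Sum>i\<in>players n. a i) \<le> (\<Sum>i\<in>players n. x i)"
  shows "core_solution n v a \<rho>"
proof -
  have part: "partition_on (players n) \<rho>" and tight: "\<And>B. B \<in> \<rho> \<Longrightarrow> (\<Sum>i\<in>B. x i) = v B"
    using x unfolding core_solution_def by blast+
  have B_sub: "B \<subseteq> players n" if "B \<in> \<rho>" for B
    using part that by (auto simp: partition_on_def)
  have surplus_nonneg: "0 \<le> (\<Sum>i\<in>B. a i) - v B" if "B \<in> \<rho>" for B
    using a B_sub[OF that] unfolding in_core_def by simp
  have "(\<Sum>B\<in>\<rho>. v B) = (\<Sum>B\<in>\<rho>. \<Sum>i\<in>B. x i)"
    using tight by simp
  then have "(\<Sum>B\<in>\<rho>. (\<Sum>i\<in>B. a i) - v B) = (\<Sum>i\<in>players n. a i) - (\<Sum>i\<in>players n. x i)"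
    by (simp add: sum_subtractf sum.partition[OF finite_players part])
  also have "\<dots> \<le> 0" using total by simp
  finally have "(\<Sum>B\<in>\<rho>. (\<Sum>i\<in>B. a i) - v B) \<le> 0" .
  moreover have "0 \<le> (\<Sum>B\<in>\<rho>. (\<Sum>i\<in>B. a i) - v B)"
    by (intro sum_nonneg surplus_nonneg)
  ultimately have "(\<Sum>B\<in>\<rho>. (\<Sum>i\<in>B. a i) - v B) = 0" by linarith
  then have "\<forall>B\<in>\<rho>. (\<Sum>i\<in>B. a i) - v B = 0"
    by (subst (asm) sum_nonneg_eq_0_iff)
      (use finite_elements[OF finite_players part] surplus_nonneg in auto)
  with part a show ?thesis unfolding core_solution_def in_core_def by simp
qed

section \<open>Occurrence of a word in an i.i.d. stream\<close>

lemma sets_Collect_stream_space_pmf: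
  "Measurable.pred (stream_space (measure_pmf p)) P \<Longrightarrow> {\<omega>. P \<omega>} \<in> sets (stream_space (measure_pmf p))"
  by (simp add: pred_def space_stream_space)

lemma emeasure_stream_space_prefix:
  assumes [measurable]: "Measurable.pred (stream_space (measure_pmf p)) R"
  shows "emeasure (stream_space (measure_pmf p))
           {\<omega>. (\<forall>i<length u. \<omega> !! i = u ! i) \<and> R (sdrop (length u) \<omega>)}
         = ennreal (prod_list (map (pmf p) u)) * emeasure (stream_space (measure_pmf p)) {\<omega>. R \<omega>}"
proof (induction u)
  case Nil
  then show ?case by simp
next
  case (Cons c u)
  let ?S = "stream_space (measure_pmf p)"
  let ?X = "{\<omega>. (\<forall>i<length (c # u). \<omega> !! i = (c # u) ! i) \<and> R (sdrop (length (c # u)) \<omega>)}"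
  let ?Y = "{\<omega>. (\<forall>i<length u. \<omega> !! i = u ! i) \<and> R (sdrop (length u) \<omega>)}"
  have "?X \<in> sets ?S" by (intro sets_Collect_stream_space_pmf) measurable
  then have "emeasure ?S ?X = (\<integral>\<^sup>+t. emeasure ?S {\<omega>\<in>space ?S. t ## \<omega> \<in> ?X} \<partial>measure_pmf p)"
    by (rule prob_space.emeasure_stream_space[OF prob_space_measure_pmf])
  also have "\<dots> = (\<integral>\<^sup>+t. emeasure ?S ?Y * indicator {c} t \<partial>measure_pmf p)"
  proof (rule nn_integral_cong)
    fix t
    have "{\<omega>\<in>space ?S. t ## \<omega> \<in> ?X} = (if t = c then ?Y else {})"
      by (auto simp: space_stream_space less_Suc_eq_0_disj)
    then show "emeasure ?S {\<omega>\<in>space ?S. t ## \<omega> \<in> ?X} = emeasure ?S ?Y * indicator {c} t"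
      by (simp split: split_indicator)
  qed
  also have "\<dots> = emeasure ?S ?Y * pmf p c"
    by (simp add: nn_integral_cmult_indicator emeasure_pmf_single)
  finally have "emeasure ?S ?X = emeasure ?S ?Y * pmf p c" .
  moreover have "0 \<le> prod_list (map (pmf p) u)"
    by (rule prod_list_nonneg) auto
  ultimately show ?case
    using Cons.IH by (simp add: ennreal_mult mult_ac)
qed

lemma emeasure_stream_space_sdrop:
  assumes [measurable]: "Measurable.pred (stream_space (measure_pmf p)) R"
  shows "emeasure (stream_space (measure_pmf p)) {\<omega>. R (sdrop L \<omega>)}
       = emeasure (stream_space (measure_pmf p)) {\<omega>. R \<omega>}"
proof (induction L)
  case 0
  then show ?case by simp
next
  case (Suc L)
  let ?S = "stream_space (measure_pmf p)"
  have "{\<omega>. R (sdrop (Suc L) \<omega>)} \<in> sets ?S" by (intro sets_Collect_stream_space_pmf) measurable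
  then have "emeasure ?S {\<omega>. R (sdrop (Suc L) \<omega>)}
      = (\<integral>\<^sup>+t. emeasure ?S {\<omega>\<in>space ?S. t ## \<omega> \<in> {\<omega>. R (sdrop (Suc L) \<omega>)}} \<partial>measure_pmf p)"
    by (rule prob_space.emeasure_stream_space[OF prob_space_measure_pmf])
  also have "\<dots> = (\<integral>\<^sup>+t. emeasure ?S {\<omega>. R \<omega>} \<partial>measure_pmf p)"
    using Suc.IH by (simp add: space_stream_space)
  finally show ?case
    by (simp add: measure_pmf.emeasure_space_1)
qed

lemma AE_word_occurs:
  assumes w: "set w \<subseteq> set_pmf p"
  shows "AE \<omega> in stream_space (measure_pmf p). \<exists>t. \<forall>i<length w. \<omega> !! (t + i) = w ! i"
proof -
  let ?S = "stream_space (measure_pmf p)"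
  interpret S: prob_space ?S
    by (rule prob_space.prob_space_stream_space[OF prob_space_measure_pmf])
  define L where "L = length w"
  define occurs where "occurs \<omega> \<longleftrightarrow> (\<exists>t. \<forall>i<L. \<omega> !! (t + i) = w ! i)" for \<omega>
  have [measurable]: "Measurable.pred ?S (\<lambda>\<omega>. \<not> occurs \<omega>)"
    unfolding occurs_def by measurable
  define N where "N = {\<omega>. \<not> occurs \<omega>}"
  define A where "A = {\<omega>. \<not> occurs (sdrop L \<omega>)}"
  define B where "B = {\<omega>. (\<forall>i<L. \<omega> !! i = w ! i) \<and> \<not> occurs (sdrop L \<omega>)}"
  have sets: "N \<in> sets ?S" "A \<in> sets ?S" "B \<in> sets ?S"
    unfolding N_def A_def B_def by (intro sets_Collect_stream_space_pmf; measurable)+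
  \<comment> \<open>The shifted stream has the law of \<omega> and is independent of the prefix, so
    P(N) \<le> P(A) - P(B) = P(N) - q P(N), where q > 0 is the probability of the prefix w.\<close>
  have "N \<subseteq> A - B"
  proof
    fix \<omega> assume "\<omega> \<in> N"
    then have no: "\<not> occurs \<omega>" by (simp add: N_def)
    then have "\<not> (\<forall>i<L. \<omega> !! i = w ! i)"
      unfolding occurs_def by (metis add_0)
    moreover have "\<not> occurs (sdrop L \<omega>)"
      using no unfolding occurs_def by (metis sdrop_snth add.assoc)
    ultimately show "\<omega> \<in> A - B" by (simp add: A_def B_def)
  qed
  define q where "q = prod_list (map (pmf p) w)"
  have q_pos: "q > 0"
    unfolding q_def using w by (induction w) (auto simp: pmf_positive)
  have "S.prob A = S.prob N"
    using emeasure_stream_space_sdrop[where p = p and R = "\<lambda>\<omega>. \<not> occurs \<omega>" and L = L]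
    by (simp add: A_def N_def S.emeasure_eq_measure)
  moreover have "S.prob B = q * S.prob N"
    using emeasure_stream_space_prefix[where p = p and R = "\<lambda>\<omega>. \<not> occurs \<omega>" and u = w] q_pos
    by (simp add: B_def N_def L_def q_def S.emeasure_eq_measure ennreal_mult[symmetric])
  moreover have "S.prob N \<le> S.prob A - S.prob B"
  proof -
    have "S.prob N \<le> S.prob (A - B)"
      using \<open>N \<subseteq> A - B\<close> sets by (intro S.finite_measure_mono) auto
    also have "\<dots> = S.prob A - S.prob B"
      using sets by (intro S.finite_measure_Diff) (auto simp: A_def B_def)
    finally show ?thesis .
  qed
  ultimately have "S.prob N = 0"
    using q_pos measure_nonneg[of ?S N] by (simp add: mult_le_0_iff)
  then show ?thesis
    using sets(1) by (intro AE_I'[of N]) (auto simp: N_def occurs_def L_def S.emeasure_eq_measure)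
qed

section \<open>Random iteration with absorbing states\<close>

lemma rtranclp_step_word:
  assumes "(\<lambda>s s'. \<exists>c\<in>C. s' = f s c)\<^sup>*\<^sup>* s s'"
  shows "\<exists>w. set w \<subseteq> C \<and> foldl f s w = s'"
  using assms
proof (induction rule: rtranclp_induct)
  case base
  show ?case by (rule exI[of _ "[]"]) simp
next
  case (step s' s'')
  then obtain w c where "set w \<subseteq> C" "foldl f s w = s'" "c \<in> C" "s'' = f s' c" by blast
  then show ?case by (intro exI[of _ "w @ [c]"]) simp
qed

lemma synchronizing_word:
  assumes fin: "finite I"
    and closed: "\<And>s c. s \<in> I \<Longrightarrow> c \<in> C \<Longrightarrow> f s c \<in> I"
    and absorbing: "\<And>s c. s \<in> A \<Longrightarrow> c \<in> C \<Longrightarrow> f s c = s"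
    and reach: "\<And>s. s \<in> I \<Longrightarrow> \<exists>s'\<in>A. (\<lambda>s s'. \<exists>c\<in>C. s' = f s c)\<^sup>*\<^sup>* s s'"
  shows "\<exists>w. set w \<subseteq> C \<and> (\<forall>s\<in>I. foldl f s w \<in> A)"
proof -
  have closed_word: "foldl f s w \<in> I" if "set w \<subseteq> C" "s \<in> I" for s w
    using that by (induction w arbitrary: s) (auto simp: closed)
  have absorbing_word: "foldl f s w = s" if "set w \<subseteq> C" "s \<in> A" for s w
    using that by (induction w arbitrary: s) (auto simp: absorbing)
  have "\<exists>w. set w \<subseteq> C \<and> (\<forall>s\<in>F. foldl f s w \<in> A)" if "finite F" "F \<subseteq> I" for F
    using that
  proof (induction F rule: finite_induct)
    case empty
    show ?case by (rule exI[of _ "[]"]) simp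
  next
    case (insert s F)
    then obtain w where w: "set w \<subseteq> C" "\<forall>t\<in>F. foldl f t w \<in> A" by blast
    have "foldl f s w \<in> I" using insert.prems w(1) by (simp add: closed_word)
    from reach[OF this] obtain s' where "s' \<in> A" "(\<lambda>s s'. \<exists>c\<in>C. s' = f s c)\<^sup>*\<^sup>* (foldl f s w) s'"
      by (elim bexE)
    from rtranclp_step_word[OF this(2)] \<open>s' \<in> A\<close> obtain w'
      where w': "set w' \<subseteq> C" "foldl f (foldl f s w) w' \<in> A"
      by blast
    have "foldl f t (w @ w') \<in> A" if "t \<in> insert s F" for t
    proof (cases "t = s")
      case False
      with that w(2) have "foldl f t w \<in> A" by simp
      with absorbing_word[OF w'(1)] show ?thesis by simp
    qed (use w' in simp)
    with w(1) w'(1) show ?case by (intro exI[of _ "w @ w'"]) simp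
  qed
  with fin show ?thesis by blast
qed

lemma run_eq_foldl:
  assumes run_Suc: "\<And>t. run (Suc t) = f (run t) (\<omega> !! t)"
    and "\<forall>i<length u. \<omega> !! (t + i) = u ! i"
  shows "run (t + length u) = foldl f (run t) u"
  using assms(2)
proof (induction u arbitrary: t)
  case (Cons c u)
  have "\<omega> !! t = c" using Cons.prems[rule_format, of 0] by simp
  have "run (t + length (c # u)) = run (Suc t + length u)" by simp
  also have "\<dots> = foldl f (run (Suc t)) u"
    using Cons.prems by (intro Cons.IH) auto
  also have "\<dots> = foldl f (run t) (c # u)"
    using \<open>\<omega> !! t = c\<close> by (simp only: run_Suc foldl_Cons)
  finally show ?case .
qed simp

lemma AE_eventually_absorbed:
  fixes f :: "'s \<Rightarrow> 'c \<Rightarrow> 's" and run :: "'c stream \<Rightarrow> nat \<Rightarrow> 's"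
  assumes fin: "finite I"
    and closed: "\<And>s c. s \<in> I \<Longrightarrow> c \<in> set_pmf p \<Longrightarrow> f s c \<in> I"
    and absorbing: "\<And>s c. s \<in> A \<Longrightarrow> c \<in> set_pmf p \<Longrightarrow> f s c = s"
    and reach: "\<And>s. s \<in> I \<Longrightarrow> \<exists>s'\<in>A. (\<lambda>s s'. \<exists>c\<in>set_pmf p. s' = f s c)\<^sup>*\<^sup>* s s'"
    and run_0: "\<And>\<omega>. run \<omega> 0 \<in> I"
    and run_Suc: "\<And>\<omega> t. run \<omega> (Suc t) = f (run \<omega> t) (\<omega> !! t)"
  shows "AE \<omega> in stream_space (measure_pmf p). \<exists>s\<in>A. \<forall>\<^sub>F t in sequentially. run \<omega> t = s"
proof -
  obtain w where w: "set w \<subseteq> set_pmf p" "\<forall>s\<in>I. foldl f s w \<in> A"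
    using synchronizing_word[OF fin closed absorbing reach] by blast
  have "AE \<omega> in stream_space (measure_pmf p). stream_all (\<lambda>c. c \<in> set_pmf p) \<omega>"
    by (rule prob_space.AE_stream_all[OF prob_space_measure_pmf]) (auto simp: AE_measure_pmf)
  moreover have "AE \<omega> in stream_space (measure_pmf p). \<exists>t. \<forall>i<length w. \<omega> !! (t + i) = w ! i"
    using w(1) by (rule AE_word_occurs)
  ultimately show ?thesis
  proof eventually_elim
    case (elim \<omega>)
    then have supp: "\<And>t. \<omega> !! t \<in> set_pmf p" by (simp add: stream_all_def)
    obtain t where t: "\<forall>i<length w. \<omega> !! (t + i) = w ! i" using elim(2) by blast
    have "run \<omega> t' \<in> I" for t'
      by (induction t') (simp_all add: run_0 run_Suc closed supp)
    then have absorbed: "run \<omega> (t + length w) \<in> A"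
      using w(2) run_eq_foldl[where run = "run \<omega>", OF run_Suc t] by simp
    have "run \<omega> (t + length w + d) = run \<omega> (t + length w)" for d
      by (induction d) (simp_all add: run_Suc absorbing[OF absorbed] supp)
    then have "\<forall>\<^sub>F t' in sequentially. run \<omega> t' = run \<omega> (t + length w)"
      unfolding eventually_sequentially by (metis le_Suc_ex)
    from this absorbed show ?case by (rule bexI)
  qed
qed

section \<open>Coalition maps\<close>

definition wf_coalitions :: "nat set \<Rightarrow> (nat \<Rightarrow> nat set) \<Rightarrow> bool" where
  "wf_coalitions P C \<longleftrightarrow> (\<forall>i. C i \<noteq> {} \<longrightarrow> i \<in> C i \<and> C i \<subseteq> P \<and> (\<forall>k\<in>C i. C k = C i))"

text \<open>On well-formed coalition maps this is the update made by a successful proposal J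
  (see cp_step_success): the members of J form J, and the coalitions that lose a member to J
  are dissolved.\<close>

definition form_coalition :: "(nat \<Rightarrow> nat set) \<Rightarrow> nat set \<Rightarrow> nat \<Rightarrow> nat set" where
  "form_coalition C J k = (if k \<in> J then J else if C k \<inter> J = {} then C k else {})"

lemma wf_coalitions_nonempty:
  assumes "wf_coalitions P C" "C i \<noteq> {}"
  shows "i \<in> P" "i \<in> C i" "C i \<subseteq> P"
  using assms unfolding wf_coalitions_def by blast+

lemma wf_coalitions_member:
  assumes "wf_coalitions P C" "k \<in> C i"
  shows "C k = C i"
  using assms unfolding wf_coalitions_def by blast

lemma wf_coalitions_form_coalition:
  assumes wfC: "wf_coalitions P C" and "J \<subseteq> P"
  shows "wf_coalitions P (form_coalition C J)"
  unfolding wf_coalitions_def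
proof (intro allI impI)
  fix i assume "form_coalition C J i \<noteq> {}"
  show "i \<in> form_coalition C J i \<and> form_coalition C J i \<subseteq> P \<and>
      (\<forall>k\<in>form_coalition C J i. form_coalition C J k = form_coalition C J i)"
  proof (cases "i \<in> J")
    case True
    with \<open>J \<subseteq> P\<close> show ?thesis by (simp add: form_coalition_def)
  next
    case False
    with \<open>form_coalition C J i \<noteq> {}\<close> have Ci: "form_coalition C J i = C i" "C i \<inter> J = {}" "C i \<noteq> {}"
      by (auto simp: form_coalition_def split: if_splits)
    have "form_coalition C J k = C i" if "k \<in> C i" for k
      using that Ci(2) wf_coalitions_member[OF wfC that] by (auto simp: form_coalition_def)
    with Ci wf_coalitions_nonempty[OF wfC Ci(3)] show ?thesis by simp
  qed
qed

lemma wf_coalitions_singleton: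
  assumes wfC: "wf_coalitions P C" and "i \<in> P" "C i = {}"
  shows "wf_coalitions P (C(i := {i}))"
  unfolding wf_coalitions_def
proof (intro allI impI)
  fix k assume "(C(i := {i})) k \<noteq> {}"
  show "k \<in> (C(i := {i})) k \<and> (C(i := {i})) k \<subseteq> P \<and>
      (\<forall>m\<in>(C(i := {i})) k. (C(i := {i})) m = (C(i := {i})) k)"
  proof (cases "k = i")
    case True
    with \<open>i \<in> P\<close> show ?thesis by simp
  next
    case False
    with \<open>(C(i := {i})) k \<noteq> {}\<close> have "C k \<noteq> {}" by simp
    have "i \<notin> C k"
      using wf_coalitions_member[OF wfC, of i k] \<open>C i = {}\<close> \<open>C k \<noteq> {}\<close> by auto
    then have "\<forall>m\<in>C k. (C(i := {i})) m = C k"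
      using wf_coalitions_member[OF wfC] by auto
    with False wf_coalitions_nonempty[OF wfC \<open>C k \<noteq> {}\<close>] show ?thesis by simp
  qed
qed

lemma wf_coalitions_finite:
  assumes "finite P" "wf_coalitions P C"
  shows "finite (C k)"
proof (cases "C k = {}")
  case False
  from finite_subset[OF wf_coalitions_nonempty(3)[OF assms(2) False] assms(1)] show ?thesis .
qed simp

lemma wf_coalitions_outside:
  assumes "wf_coalitions P C" "i \<notin> P"
  shows "C i = {}"
  using wf_coalitions_nonempty(1)[OF assms(1)] assms(2) by blast

lemma wf_coalitions_partition_on:
  assumes wfC: "wf_coalitions P C"
  shows "partition_on {i\<in>P. C i \<noteq> {}} {C i | i. i \<in> P \<and> C i \<noteq> {}}"
proof (rule partition_onI)
  show "\<Union>{C i | i. i \<in> P \<and> C i \<noteq> {}} = {i\<in>P. C i \<noteq> {}}"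
  proof (intro equalityI subsetI)
    fix k assume "k \<in> \<Union>{C i | i. i \<in> P \<and> C i \<noteq> {}}"
    then obtain i where "k \<in> C i" "C i \<noteq> {}" by blast
    with wf_coalitions_member[OF wfC \<open>k \<in> C i\<close>] wf_coalitions_nonempty[OF wfC]
    show "k \<in> {i\<in>P. C i \<noteq> {}}" by auto
  next
    fix k assume "k \<in> {i\<in>P. C i \<noteq> {}}"
    with wf_coalitions_nonempty(2)[OF wfC] show "k \<in> \<Union>{C i | i. i \<in> P \<and> C i \<noteq> {}}" by blast
  qed
next
  fix A B assume "A \<in> {C i | i. i \<in> P \<and> C i \<noteq> {}}" "B \<in> {C i | i. i \<in> P \<and> C i \<noteq> {}}" "A \<noteq> B"
  then obtain i j where "A = C i" "B = C j" "C i \<noteq> C j" by blast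
  have "C i \<inter> C j = {}"
  proof (rule ccontr)
    assume "C i \<inter> C j \<noteq> {}"
    then obtain k where "k \<in> C i" "k \<in> C j" by blast
    with \<open>C i \<noteq> C j\<close> show False
      using wf_coalitions_member[OF wfC \<open>k \<in> C i\<close>] wf_coalitions_member[OF wfC \<open>k \<in> C j\<close>] by simp
  qed
  with \<open>A = C i\<close> \<open>B = C j\<close> show "disjnt A B" by (simp add: disjnt_def)
qed auto

lemma cp_step_success:
  assumes wfC: "wf_coalitions P C" and success: "(\<Sum>j\<in>insert i S. a j) + \<delta> \<le> v (insert i S)"
  shows "cp_step v \<delta> (a, C) (i, S) = (a(i := a i + \<delta>), form_coalition C (insert i S))"
proof -
  let ?J = "insert i S"
  have "cp_step v \<delta> (a, C) (i, S) =
      (a(i := a i + \<delta>), \<lambda>k. if k \<in> ?J then ?J else if \<exists>j\<in>?J. k \<in> C j \<and> k \<noteq> j then {} else C k)"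
    using success unfolding cp_step_def Let_def Un_insert_right Un_empty_right by simp
  also have "(\<lambda>k. if k \<in> ?J then ?J else if \<exists>j\<in>?J. k \<in> C j \<and> k \<noteq> j then {} else C k) = form_coalition C ?J"
  proof
    fix k
    have "(\<exists>j\<in>?J. k \<in> C j \<and> k \<noteq> j) \<longleftrightarrow> C k \<inter> ?J \<noteq> {}" if "k \<notin> ?J"
    proof
      assume "\<exists>j\<in>?J. k \<in> C j \<and> k \<noteq> j"
      then obtain j where "j \<in> ?J" "k \<in> C j" by blast
      then show "C k \<inter> ?J \<noteq> {}"
        using wf_coalitions_member[OF wfC] wf_coalitions_nonempty(2)[OF wfC] by blast
    next
      assume "C k \<inter> ?J \<noteq> {}"
      then obtain j where "j \<in> ?J" "j \<in> C k" by blast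
      then show "\<exists>j\<in>?J. k \<in> C j \<and> k \<noteq> j"
        using that wf_coalitions_member[OF wfC] wf_coalitions_nonempty(2)[OF wfC] by blast
    qed
    then show "(if k \<in> ?J then ?J else if \<exists>j\<in>?J. k \<in> C j \<and> k \<noteq> j then {} else C k) = form_coalition C ?J k"
      by (auto simp: form_coalition_def)
  qed
  finally show ?thesis .
qed

lemma cp_step_fail_attached:
  assumes "\<not> (\<Sum>j\<in>insert i S. a j) + \<delta> \<le> v (insert i S)" "C i \<noteq> {}"
  shows "cp_step v \<delta> (a, C) (i, S) = (a, C)"
  using assms by (simp add: cp_step_def Let_def)

lemma cp_step_fail_unattached:
  assumes "\<not> (\<Sum>j\<in>insert i S. a j) + \<delta> \<le> v (insert i S)" "C i = {}"
  shows "cp_step v \<delta> (a, C) (i, S) =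
    (a(i := max (v {i}) (a i - \<delta>)), if a i - \<delta> \<le> v {i} then C(i := {i}) else C)"
  using assms by (auto simp: cp_step_def Let_def max_def)

lemma misplaced_form_coalition:
  assumes wfC: "wf_coalitions P C" and part: "partition_on P \<rho>" and B: "B \<in> \<rho>"
  shows "{j\<in>P. form_coalition C B j \<notin> \<rho>} \<subseteq> {j\<in>P. C j \<notin> \<rho>} - B"
proof
  fix j assume "j \<in> {j\<in>P. form_coalition C B j \<notin> \<rho>}"
  then have j: "j \<in> P" "form_coalition C B j \<notin> \<rho>" by simp_all
  then have "j \<notin> B" using B by (auto simp: form_coalition_def)
  have "C j \<notin> \<rho>"
  proof
    assume "C j \<in> \<rho>"
    then have "C j \<noteq> {}" using part by (auto simp: partition_on_def)
    then have "j \<in> C j" by (rule wf_coalitions_nonempty(2)[OF wfC])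
    with \<open>j \<notin> B\<close> have "C j \<inter> B = {}"
      using part \<open>C j \<in> \<rho>\<close> B unfolding partition_on_def disjoint_def by blast
    with j \<open>j \<notin> B\<close> \<open>C j \<in> \<rho>\<close> show False by (simp add: form_coalition_def)
  qed
  with j(1) \<open>j \<notin> B\<close> show "j \<in> {j\<in>P. C j \<notin> \<rho>} - B" by simp
qed

section \<open>The Coalition Proposal dynamics\<close>

definition proposals :: "nat \<Rightarrow> (nat \<times> nat set) set" where
  "proposals n = {(i, S). i \<in> players n \<and> S \<subseteq> players n - {i}}"

locale cp_game =
  fixes n :: nat and v :: "nat set \<Rightarrow> real" and \<delta> :: real and a0 :: "nat \<Rightarrow> real"
  assumes delta_pos: "\<delta> > 0"
    and v_mult: "\<forall>S. S \<subseteq> players n \<longrightarrow> is_mult \<delta> (v S)"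
    and a0_mult: "\<forall>i\<in>players n. is_mult \<delta> (a0 i)"
begin

definition aspiration_floor :: "nat \<Rightarrow> real" where
  "aspiration_floor i = min (a0 i) (v {i})"

text \<open>A successful proposal J raises a i only if the aspirations in J sum to at most v J - \<delta>;
  as the other aspirations are at least their floors, no aspiration is raised above this bound.\<close>

definition aspiration_bound :: real where
  "aspiration_bound = (\<Sum>S\<in>Pow (players n). \<bar>v S\<bar>) + (\<Sum>j\<in>players n. \<bar>aspiration_floor j\<bar>)"

definition aspiration_ceiling :: "nat \<Rightarrow> real" where
  "aspiration_ceiling i = max (a0 i) aspiration_bound"

fun cp_inv :: "cp_state \<Rightarrow> bool" where
  "cp_inv (a, C) \<longleftrightarrow> wf_coalitions (players n) C \<and> (\<forall>i. i \<notin> players n \<longrightarrow> a i = a0 i) \<and>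
     (\<forall>i\<in>players n. is_mult \<delta> (a i) \<and> aspiration_floor i \<le> a i \<and> a i \<le> aspiration_ceiling i) \<and>
     (\<forall>i. C i \<noteq> {} \<longrightarrow> (\<Sum>j\<in>C i. a j) \<le> v (C i))"

fun absorbing :: "cp_state \<Rightarrow> bool" where
  "absorbing (a, C) \<longleftrightarrow> cp_inv (a, C) \<and> (\<forall>i\<in>players n. C i \<noteq> {}) \<and> in_core n v a"

definition cp_move :: "cp_state \<Rightarrow> cp_state \<Rightarrow> bool" where
  "cp_move s s' \<longleftrightarrow> (\<exists>c\<in>proposals n. s' = cp_step v \<delta> s c)"

lemma v_le_sum_abs:
  assumes "J \<subseteq> players n"
  shows "v J \<le> (\<Sum>S\<in>Pow (players n). \<bar>v S\<bar>)"
proof -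
  have "v J \<le> \<bar>v J\<bar>" by simp
  also have "\<dots> \<le> (\<Sum>S\<in>Pow (players n). \<bar>v S\<bar>)"
    using assms by (intro member_le_sum) auto
  finally show ?thesis .
qed

lemma v_le_aspiration_bound:
  assumes "J \<subseteq> players n"
  shows "v J \<le> aspiration_bound"
proof -
  have "0 \<le> (\<Sum>j\<in>players n. \<bar>aspiration_floor j\<bar>)" by (rule sum_nonneg) simp
  with v_le_sum_abs[OF assms] show ?thesis
    unfolding aspiration_bound_def by linarith
qed

lemma cp_inv_init: "cp_inv (a0, \<lambda>_. {})"
  using a0_mult by (simp add: wf_coalitions_def aspiration_floor_def aspiration_ceiling_def)

lemma cp_inv_success:
  assumes inv: "cp_inv (a, C)" and J: "i \<in> J" "J \<subseteq> players n"
    and success: "(\<Sum>j\<in>J. a j) + \<delta> \<le> v J"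
  shows "cp_inv (a(i := a i + \<delta>), form_coalition C J)"
proof -
  have wfC: "wf_coalitions (players n) C" and sums: "\<And>k. C k \<noteq> {} \<Longrightarrow> (\<Sum>j\<in>C k. a j) \<le> v (C k)"
    and bounds: "\<And>j. j \<in> players n \<Longrightarrow> is_mult \<delta> (a j) \<and> aspiration_floor j \<le> a j \<and> a j \<le> aspiration_ceiling j"
    using inv by auto
  have fin: "finite J" using finite_subset[OF J(2) finite_players] .
  have "(\<Sum>j\<in>J - {i}. \<bar>aspiration_floor j\<bar>) \<le> (\<Sum>j\<in>players n. \<bar>aspiration_floor j\<bar>)"
    using J(2) by (intro sum_mono2) auto
  moreover have "- (\<Sum>j\<in>J - {i}. \<bar>aspiration_floor j\<bar>) \<le> (\<Sum>j\<in>J - {i}. a j)"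
    unfolding sum_negf[symmetric] using J(2) bounds by (intro sum_mono) force
  moreover note v_le_sum_abs[OF J(2)]
  ultimately have "a i + \<delta> \<le> aspiration_bound"
    using success sum.remove[OF fin J(1), of a] unfolding aspiration_bound_def by linarith
  then have raised: "a i + \<delta> \<le> aspiration_ceiling i"
    by (simp add: aspiration_ceiling_def)
  have "(\<Sum>j\<in>form_coalition C J k. (a(i := a i + \<delta>)) j) \<le> v (form_coalition C J k)"
    if "form_coalition C J k \<noteq> {}" for k
  proof (cases "k \<in> J")
    case True
    then have "form_coalition C J k = J" by (simp add: form_coalition_def)
    then show ?thesis
      using success J(1) by (simp only: sum_fun_upd[OF fin]) simp
  next
    case False
    with that have Ck: "form_coalition C J k = C k" "C k \<noteq> {}" "i \<notin> C k"
      using J(1) by (auto simp: form_coalition_def split: if_splits)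
    then show ?thesis
      using sums[OF \<open>C k \<noteq> {}\<close>] unfolding Ck(1) sum_fun_upd[OF wf_coalitions_finite[OF finite_players wfC]]
      by simp
  qed
  with inv J raised delta_pos wf_coalitions_form_coalition[OF wfC J(2)] show ?thesis
    by (auto intro: is_mult_add is_mult_self)
qed

lemma cp_inv_unattached:
  assumes inv: "cp_inv (a, C)" and i: "i \<in> players n" "C i = {}"
  shows "cp_inv (a(i := max (v {i}) (a i - \<delta>)), if a i - \<delta> \<le> v {i} then C(i := {i}) else C)"
proof -
  let ?m = "max (v {i}) (a i - \<delta>)" and ?C' = "if a i - \<delta> \<le> v {i} then C(i := {i}) else C"
  have wfC: "wf_coalitions (players n) C" and sums: "\<And>k. C k \<noteq> {} \<Longrightarrow> (\<Sum>j\<in>C k. a j) \<le> v (C k)"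
    and bounds: "is_mult \<delta> (a i)" "a i \<le> aspiration_ceiling i"
    using inv i by auto
  have "is_mult \<delta> ?m"
    using v_mult i bounds(1) by (simp add: max_def is_mult_diff is_mult_self)
  moreover have "aspiration_floor i \<le> ?m"
    by (simp add: aspiration_floor_def)
  moreover have "v {i} \<le> aspiration_ceiling i"
    using v_le_aspiration_bound[of "{i}"] i(1) by (simp add: aspiration_ceiling_def le_max_iff_disj)
  then have "?m \<le> aspiration_ceiling i"
    using bounds(2) delta_pos by simp
  moreover have "wf_coalitions (players n) ?C'"
    using wf_coalitions_singleton[OF wfC i] wfC by simp
  moreover have "(\<Sum>j\<in>?C' k. (a(i := ?m)) j) \<le> v (?C' k)" if "?C' k \<noteq> {}" for k
  proof (cases "a i - \<delta> \<le> v {i} \<and> k = i")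
    case True
    then show ?thesis by simp
  next
    case False
    with that i(2) have Ck: "?C' k = C k" "C k \<noteq> {}" by (auto split: if_splits)
    have "i \<notin> C k"
      using wf_coalitions_member[OF wfC, of i k] i(2) \<open>C k \<noteq> {}\<close> by auto
    then show ?thesis
      unfolding Ck(1) sum_fun_upd[OF wf_coalitions_finite[OF finite_players wfC]]
      using sums[OF Ck(2)] by simp
  qed
  ultimately show ?thesis using inv i by auto
qed

lemma cp_inv_step:
  assumes inv: "cp_inv s" and c: "c \<in> proposals n"
  shows "cp_inv (cp_step v \<delta> s c)"
proof -
  obtain a C i S where s: "s = (a, C)" and c: "c = (i, S)" and J: "i \<in> players n" "insert i S \<subseteq> players n"
    using c by (cases s, cases c) (auto simp: proposals_def)
  have inv_aC: "cp_inv (a, C)" using inv s by simp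
  then have wfC: "wf_coalitions (players n) C" by simp
  consider (success) "(\<Sum>j\<in>insert i S. a j) + \<delta> \<le> v (insert i S)"
    | (attached) "\<not> (\<Sum>j\<in>insert i S. a j) + \<delta> \<le> v (insert i S)" "C i \<noteq> {}"
    | (unattached) "\<not> (\<Sum>j\<in>insert i S. a j) + \<delta> \<le> v (insert i S)" "C i = {}"
    by blast
  then show ?thesis
  proof cases
    case success
    have "cp_step v \<delta> s c = (a(i := a i + \<delta>), form_coalition C (insert i S))"
      unfolding s c by (rule cp_step_success[OF wfC]) (rule success)
    with cp_inv_success[OF inv_aC insertI1 J(2) success] show ?thesis by simp
  next
    case attached
    have "cp_step v \<delta> s c = s"
      unfolding s c by (intro cp_step_fail_attached attached)
    with inv show ?thesis by simp
  next
    case unattached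
    have "cp_step v \<delta> s c =
        (a(i := max (v {i}) (a i - \<delta>)), if a i - \<delta> \<le> v {i} then C(i := {i}) else C)"
      unfolding s c by (intro cp_step_fail_unattached unattached)
    with cp_inv_unattached[OF inv_aC J(1) unattached(2)] show ?thesis by simp
  qed
qed

lemma cp_inv_moves: "cp_move\<^sup>*\<^sup>* s s' \<Longrightarrow> cp_inv s \<Longrightarrow> cp_inv s'"
  by (induction rule: rtranclp_induct) (auto simp: cp_move_def cp_inv_step)

lemma absorbing_step:
  assumes abs: "absorbing s" and c: "c \<in> proposals n"
  shows "cp_step v \<delta> s c = s"
proof -
  obtain a C i S where s: "s = (a, C)" and c: "c = (i, S)" and J: "i \<in> players n" "insert i S \<subseteq> players n"
    using c by (cases s, cases c) (auto simp: proposals_def)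
  have "v (insert i S) \<le> (\<Sum>j\<in>insert i S. a j)" "C i \<noteq> {}"
    using abs J unfolding s by (auto simp: in_core_def)
  with delta_pos show ?thesis
    unfolding s c by (intro cp_step_fail_attached) auto
qed

lemma finite_cp_inv: "finite {s. cp_inv s}"
proof (rule finite_subset)
  let ?A = "{a. (\<forall>i\<in>players n. a i \<in> {r. is_mult \<delta> r \<and> aspiration_floor i \<le> r \<and> r \<le> aspiration_ceiling i})
                \<and> (\<forall>i. i \<notin> players n \<longrightarrow> a i = a0 i)}"
  let ?C = "{C. (\<forall>i\<in>players n. C i \<in> Pow (players n)) \<and> (\<forall>i. i \<notin> players n \<longrightarrow> C i = {})}"
  show "{s. cp_inv s} \<subseteq> ?A \<times> ?C"
  proof
    fix s assume "s \<in> {s. cp_inv s}"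
    then obtain a C where s: "s = (a, C)" and inv: "cp_inv (a, C)" by (cases s) auto
    then have wfC: "wf_coalitions (players n) C" by simp
    have "C i \<subseteq> players n" for i
      using wf_coalitions_nonempty(3)[OF wfC, of i] by (cases "C i = {}") auto
    with inv wf_coalitions_outside[OF wfC] show "s \<in> ?A \<times> ?C" unfolding s by auto
  qed
  show "finite (?A \<times> ?C)"
    using delta_pos by (intro finite_cartesian_product finite_funs_fixed_outside finite_is_mult_interval) auto
qed

lemma absorbing_core_solution:
  assumes "absorbing (a, C)"
  shows "core_solution n v a {C i | i. i \<in> players n \<and> C i \<noteq> {}}"
proof -
  have wfC: "wf_coalitions (players n) C" and attached: "\<forall>i\<in>players n. C i \<noteq> {}"
    and core: "in_core n v a" and sums: "\<And>i. C i \<noteq> {} \<Longrightarrow> (\<Sum>j\<in>C i. a j) \<le> v (C i)"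
    using assms by auto
  have "{i\<in>players n. C i \<noteq> {}} = players n" using attached by blast
  then have "partition_on (players n) {C i | i. i \<in> players n \<and> C i \<noteq> {}}"
    using wf_coalitions_partition_on[OF wfC] by simp
  moreover have "(\<Sum>j\<in>C i. a j) = v (C i)" if "C i \<noteq> {}" for i
    using sums[OF that] core wf_coalitions_nonempty(3)[OF wfC that] by (simp add: in_core_def antisym)
  ultimately show ?thesis
    using core unfolding core_solution_def in_core_def by auto
qed

lemma cp_move_proposal:
  assumes "i \<in> players n" "S \<subseteq> players n - {i}"
  shows "cp_move s (cp_step v \<delta> s (i, S))"
  using assms unfolding cp_move_def proposals_def by blast

lemma cp_move_attach_self:
  assumes "k \<in> players n" "C k = {}" "a k = v {k}"
  shows "cp_move (a, C) (a, C(k := {k}))"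
proof -
  have "cp_step v \<delta> (a, C) (k, {}) = (a, C(k := {k}))"
    using cp_step_fail_unattached[of a k "{}" \<delta> v C] assms delta_pos by (simp add: fun_upd_idem)
  with cp_move_proposal[of k "{}" "(a, C)"] assms(1) show ?thesis by simp
qed

lemma cp_move_lower:
  assumes "k \<in> players n" "C k = {}" "v {k} + \<delta> \<le> a k"
  shows "cp_move (a, C) (a(k := a k - \<delta>), if a k - \<delta> \<le> v {k} then C(k := {k}) else C)"
proof -
  have "cp_step v \<delta> (a, C) (k, {}) = (a(k := a k - \<delta>), if a k - \<delta> \<le> v {k} then C(k := {k}) else C)"
    using cp_step_fail_unattached[of a k "{}" \<delta> v C] assms delta_pos by simp
  with cp_move_proposal[of k "{}" "(a, C)"] assms(1) show ?thesis by simp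
qed

lemma cp_move_raise:
  assumes inv: "cp_inv (a, C)" and T: "i \<in> T" "T \<subseteq> players n" and deficit: "(\<Sum>j\<in>T. a j) < v T"
  shows "cp_move (a, C) (a(i := a i + \<delta>), form_coalition C T)"
proof -
  have "is_mult \<delta> (\<Sum>j\<in>T. a j)" using inv T(2) by (intro is_mult_sum) auto
  with deficit have "(\<Sum>j\<in>insert i (T - {i}). a j) + \<delta> \<le> v (insert i (T - {i}))"
    using v_mult T delta_pos by (simp add: insert_absorb is_mult_less_imp_add_le)
  then have "cp_step v \<delta> (a, C) (i, T - {i}) = (a(i := a i + \<delta>), form_coalition C T)"
    using inv T(1) by (subst cp_step_success[of "players n"]) (simp_all add: insert_absorb)
  with cp_move_proposal[of i "T - {i}" "(a, C)"] T show ?thesis by auto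
qed

lemma sum_attached_le:
  assumes inv: "cp_inv (a, C)" and x: "in_core n v x"
  shows "(\<Sum>j\<in>{i\<in>players n. C i \<noteq> {}}. a j) \<le> (\<Sum>j\<in>{i\<in>players n. C i \<noteq> {}}. x j)"
proof -
  let ?U = "{i\<in>players n. C i \<noteq> {}}" and ?\<kappa> = "{C i | i. i \<in> players n \<and> C i \<noteq> {}}"
  have wfC: "wf_coalitions (players n) C" and sums: "\<And>i. C i \<noteq> {} \<Longrightarrow> (\<Sum>j\<in>C i. a j) \<le> v (C i)"
    using inv by auto
  have part: "partition_on ?U ?\<kappa>" by (rule wf_coalitions_partition_on[OF wfC])
  have "(\<Sum>j\<in>?U. a j) = (\<Sum>B\<in>?\<kappa>. \<Sum>j\<in>B. a j)" by (rule sum.partition[OF _ part]) simp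
  also have "\<dots> \<le> (\<Sum>B\<in>?\<kappa>. \<Sum>j\<in>B. x j)"
  proof (rule sum_mono)
    fix B assume "B \<in> ?\<kappa>"
    then obtain i where "B = C i" "C i \<noteq> {}" by blast
    with sums x wf_coalitions_nonempty(3)[OF wfC] show "(\<Sum>j\<in>B. a j) \<le> (\<Sum>j\<in>B. x j)"
      unfolding in_core_def by (meson order_trans)
  qed
  also have "\<dots> = (\<Sum>j\<in>?U. x j)" by (rule sum.partition[OF _ part, symmetric]) simp
  finally show ?thesis .
qed

lemma core_solution_if_no_improvement:
  assumes x: "core_solution n v x \<rho>" and inv: "cp_inv (a, C)"
    and unattached: "\<forall>k\<in>players n. C k = {} \<longrightarrow> a k \<le> x k"
    and no_raise: "\<forall>T i. T \<subseteq> players n \<longrightarrow> i \<in> T \<longrightarrow> a i < x i \<longrightarrow> v T \<le> (\<Sum>j\<in>T. a j)"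
  shows "core_solution n v a \<rho>"
proof (rule core_solution_if_total_le[OF x in_core_if_no_raise[OF core_solution_in_core[OF x] no_raise]])
  let ?U = "{i\<in>players n. C i \<noteq> {}}"
  have "(\<Sum>j\<in>players n - ?U. a j) \<le> (\<Sum>j\<in>players n - ?U. x j)"
    using unattached by (intro sum_mono) auto
  with sum_attached_le[OF inv core_solution_in_core[OF x]]
  show "(\<Sum>i\<in>players n. a i) \<le> (\<Sum>i\<in>players n. x i)"
    using sum.subset_diff[of ?U "players n" a] sum.subset_diff[of ?U "players n" x] by simp
qed

lemma improving_move_or_core_solution:
  assumes x: "core_solution n v x \<rho>" "\<forall>i\<in>players n. is_mult \<delta> (x i)" and inv: "cp_inv (a, C)"
  shows "core_solution n v a \<rho> \<or>
    (\<exists>a' C'. cp_move (a, C) (a', C') \<and>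
       (\<Sum>i\<in>players n. \<bar>a' i - x i\<bar>) = (\<Sum>i\<in>players n. \<bar>a i - x i\<bar>) - \<delta>)"
proof -
  have a_mult: "is_mult \<delta> (a i)" if "i \<in> players n" for i using inv that by simp
  note x_single = in_core_singleton[OF core_solution_in_core[OF x(1)]]
  consider (lower) k where "k \<in> players n" "C k = {}" "x k < a k"
    | (raise) T i where "T \<subseteq> players n" "i \<in> T" "a i < x i" "(\<Sum>j\<in>T. a j) < v T"
    | (core) "\<forall>k\<in>players n. C k = {} \<longrightarrow> a k \<le> x k"
        "\<forall>T i. T \<subseteq> players n \<longrightarrow> i \<in> T \<longrightarrow> a i < x i \<longrightarrow> v T \<le> (\<Sum>j\<in>T. a j)"
    by (meson not_le)
  then show ?thesis
  proof cases
    case lower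
    with x(2) a_mult delta_pos have "x k + \<delta> \<le> a k" by (simp add: is_mult_less_imp_add_le)
    moreover have "v {k} + \<delta> \<le> a k" using calculation x_single[OF lower(1)] by linarith
    ultimately show ?thesis
      using cp_move_lower[of k C a] sum_abs_diff_fun_upd[of "players n" k "a k - \<delta>" x a \<delta>] lower delta_pos
      by fastforce
  next
    case raise
    with x(2) a_mult delta_pos have "a i + \<delta> \<le> x i" by (simp add: is_mult_less_imp_add_le subsetD)
    then show ?thesis
      using cp_move_raise[of a C i T] inv raise sum_abs_diff_fun_upd[of "players n" i "a i + \<delta>" x a \<delta>]
        raise delta_pos by fastforce
  next
    case core
    with core_solution_if_no_improvement[OF x(1) inv] show ?thesis by blast
  qed
qed

text \<open>Player k first lowers its aspiration by \<delta> with a failing solo proposal, which leaves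
  the tight block B a surplus of \<delta>; proposing B then succeeds and gives k back its \<delta>.\<close>

lemma cp_moves_join_block:
  assumes inv: "cp_inv (a, C)" and k: "k \<in> B" "C k = {}" and B: "B \<subseteq> players n" "(\<Sum>j\<in>B. a j) = v B"
    and high: "v {k} + \<delta> \<le> a k"
  shows "\<exists>C1. wf_coalitions (players n) C1 \<and> (\<forall>j. j \<noteq> k \<longrightarrow> C1 j = C j) \<and>
    cp_move\<^sup>*\<^sup>* (a, C) (a, form_coalition C1 B)"
proof -
  let ?a1 = "a(k := a k - \<delta>)" and ?C1 = "if a k - \<delta> \<le> v {k} then C(k := {k}) else C"
  have kN: "k \<in> players n" using k B by blast
  have move1: "cp_move (a, C) (?a1, ?C1)" using cp_move_lower[of k C a] kN k(2) high by blast
  then have inv1: "cp_inv (?a1, ?C1)" using inv cp_inv_moves by blast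
  moreover have "(\<Sum>j\<in>B. ?a1 j) < v B"
    using B delta_pos k(1) by (simp only: sum_fun_upd[OF finite_subset[OF B(1) finite_players]]) simp
  ultimately have move2: "cp_move (?a1, ?C1) (?a1(k := ?a1 k + \<delta>), form_coalition ?C1 B)"
    using cp_move_raise[of ?a1 ?C1 k B] k(1) B(1) by blast
  have "?a1(k := ?a1 k + \<delta>) = a" by auto
  with move1 move2 have "cp_move\<^sup>*\<^sup>* (a, C) (a, form_coalition ?C1 B)" by auto
  with inv1 show ?thesis by (intro exI[of _ ?C1]) simp
qed

definition misplaced :: "nat set set \<Rightarrow> (nat \<Rightarrow> nat set) \<Rightarrow> nat set" where
  "misplaced \<rho> C = {j\<in>players n. C j \<notin> \<rho>}"

definition unattached :: "(nat \<Rightarrow> nat set) \<Rightarrow> nat set" where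
  "unattached C = {j\<in>players n. C j = {}}"

lemma attach_progress:
  assumes core: "core_solution n v a \<rho>" and inv: "cp_inv (a, C)" and k: "k \<in> players n" "C k = {}"
  shows "\<exists>C'. cp_move\<^sup>*\<^sup>* (a, C) (a, C') \<and>
    (card (misplaced \<rho> C') < card (misplaced \<rho> C) \<or>
     card (misplaced \<rho> C') = card (misplaced \<rho> C) \<and> card (unattached C') < card (unattached C))"
proof -
  have part: "partition_on (players n) \<rho>" and tight: "\<And>B. B \<in> \<rho> \<Longrightarrow> (\<Sum>j\<in>B. a j) = v B"
    using core by (simp_all add: core_solution_def)
  have k_misplaced: "k \<in> misplaced \<rho> C"
    using k part by (auto simp: misplaced_def partition_on_def)
  have "is_mult \<delta> (v {k})" "is_mult \<delta> (a k)" using v_mult inv k(1) by simp_all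
  then consider "a k = v {k}" | "v {k} + \<delta> \<le> a k"
    using in_core_singleton[OF core_solution_in_core[OF core] k(1)] is_mult_less_imp_add_le[OF delta_pos]
    by fastforce
  then show ?thesis
  proof cases
    case 1
    have "cp_move (a, C) (a, C(k := {k}))"
      using cp_move_attach_self[of k C a] k 1 by blast
    moreover have "card (misplaced \<rho> (C(k := {k}))) \<le> card (misplaced \<rho> C)"
      using k_misplaced by (intro card_mono) (auto simp: misplaced_def)
    moreover have "card (unattached (C(k := {k}))) < card (unattached C)"
      using k by (intro psubset_card_mono) (auto simp: unattached_def)
    ultimately show ?thesis by (intro exI[of _ "C(k := {k})"]) auto
  next
    case 2
    obtain B where B: "B \<in> \<rho>" "k \<in> B" using part k(1) by (auto simp: partition_on_def)
    have BN: "B \<subseteq> players n" using part B(1) by (auto simp: partition_on_def)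
    obtain C1 where C1: "wf_coalitions (players n) C1" "\<forall>j. j \<noteq> k \<longrightarrow> C1 j = C j"
      and moves: "cp_move\<^sup>*\<^sup>* (a, C) (a, form_coalition C1 B)"
      using cp_moves_join_block[OF inv B(2) k(2) BN tight[OF B(1)] 2] by blast
    have "misplaced \<rho> (form_coalition C1 B) \<subseteq> {j\<in>players n. C1 j \<notin> \<rho>} - B"
      unfolding misplaced_def by (rule misplaced_form_coalition[OF C1(1) part B(1)])
    also have "\<dots> \<subseteq> misplaced \<rho> C - {k}"
      using C1(2) B(2) by (auto simp: misplaced_def)
    also have "\<dots> \<subset> misplaced \<rho> C"
      using k_misplaced by blast
    finally have "card (misplaced \<rho> (form_coalition C1 B)) < card (misplaced \<rho> C)"
      by (intro psubset_card_mono) (simp_all add: misplaced_def)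
    with moves show ?thesis by blast
  qed
qed

lemma reaches_absorbing_from_core:
  assumes core: "core_solution n v a \<rho>" and "cp_inv (a, C)"
  shows "\<exists>s. cp_move\<^sup>*\<^sup>* (a, C) s \<and> absorbing s"
  using assms(2)
proof (induction C rule: wf_induct_rule[OF wf_measures[of
      "[\<lambda>C. card (misplaced \<rho> C), \<lambda>C. card (unattached C)]"], case_names less])
  case (less C)
  show ?case
  proof (cases "\<forall>i\<in>players n. C i \<noteq> {}")
    case True
    with less.prems core_solution_in_core[OF core] have "absorbing (a, C)" by simp
    then show ?thesis by blast
  next
    case False
    then obtain k where "k \<in> players n" "C k = {}" by blast
    from attach_progress[OF core less.prems this] obtain C' where moves: "cp_move\<^sup>*\<^sup>* (a, C) (a, C')"
      and "(C', C) \<in> measures [\<lambda>C. card (misplaced \<rho> C), \<lambda>C. card (unattached C)]"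
      by auto
    with less.IH cp_inv_moves[OF moves less.prems] obtain s
      where "cp_move\<^sup>*\<^sup>* (a, C') s" "absorbing s" by blast
    with moves show ?thesis by (meson rtranclp_trans)
  qed
qed

lemma reaches_absorbing:
  assumes x: "core_solution n v x \<rho>" "\<forall>i\<in>players n. is_mult \<delta> (x i)" and inv: "cp_inv s"
  shows "\<exists>s'. cp_move\<^sup>*\<^sup>* s s' \<and> absorbing s'"
proof -
  let ?d = "\<lambda>a. \<Sum>i\<in>players n. \<bar>a i - x i\<bar>"
  have "\<exists>s'. cp_move\<^sup>*\<^sup>* (a, C) s' \<and> absorbing s'"
    if "cp_inv (a, C)" "?d a \<le> real m * \<delta>" for m a C
    using that
  proof (induction m arbitrary: a C rule: less_induct)
    case (less m a C)
    from improving_move_or_core_solution[OF x less.prems(1)] show ?case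
    proof
      assume "core_solution n v a \<rho>"
      from reaches_absorbing_from_core[OF this less.prems(1)] show ?case .
    next
      assume "\<exists>a' C'. cp_move (a, C) (a', C') \<and> ?d a' = ?d a - \<delta>"
      then obtain a' C' where move: "cp_move (a, C) (a', C')" and closer: "?d a' = ?d a - \<delta>"
        by blast
      have "0 \<le> ?d a'" by (simp add: sum_nonneg)
      with closer less.prems(2) delta_pos obtain m' where m: "m = Suc m'"
        by (cases m) auto
      have "cp_inv (a', C')" using move less.prems(1) cp_inv_moves by blast
      moreover have "?d a' \<le> real m' * \<delta>"
        using closer less.prems(2) m by (simp add: algebra_simps)
      ultimately obtain s' where "cp_move\<^sup>*\<^sup>* (a', C') s'" "absorbing s'"
        using less.IH[of m'] m by blast
      with move show ?case by (meson converse_rtranclp_into_rtranclp)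
    qed
  qed
  moreover obtain a C where "s = (a, C)" by fastforce
  moreover have "?d a \<le> real (nat \<lceil>?d a / \<delta>\<rceil>) * \<delta>" for a
    using delta_pos by (simp add: pos_divide_le_eq[symmetric])
  ultimately show ?thesis using inv by blast
qed

lemma AE_eventually_absorbing:
  assumes x: "core_solution n v x \<rho>" "\<forall>i\<in>players n. is_mult \<delta> (x i)"
    and supp: "set_pmf p = proposals n"
  shows "AE \<omega> in stream_space (measure_pmf p).
    \<exists>s\<in>{s. absorbing s}. \<forall>\<^sub>F t in sequentially. cp_run v \<delta> a0 \<omega> t = s"
proof (rule AE_eventually_absorbed[where I = "{s. cp_inv s}" and f = "cp_step v \<delta>"])
  have moves: "(\<lambda>s s'. \<exists>c\<in>set_pmf p. s' = cp_step v \<delta> s c) = cp_move"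
    by (simp add: fun_eq_iff cp_move_def supp)
  show "\<exists>s'\<in>{s. absorbing s}. (\<lambda>s s'. \<exists>c\<in>set_pmf p. s' = cp_step v \<delta> s c)\<^sup>*\<^sup>* s s'"
    if "s \<in> {s. cp_inv s}" for s
    unfolding moves using reaches_absorbing[OF x] that by blast
qed (use finite_cp_inv cp_inv_step absorbing_step cp_inv_init supp in auto)

end

theorem theorem1:
  fixes n :: nat and v :: "nat set \<Rightarrow> real" and \<delta> :: real
    and p :: "(nat \<times> nat set) pmf" and a0 :: "nat \<Rightarrow> real"
  assumes v_empty: "v {} = 0"
    and core_nonempty: "\<exists>x \<rho>. core_solution n v x \<rho>"
    and delta_pos: "\<delta> > 0"
    and v_mult: "\<forall>S. S \<subseteq> players n \<longrightarrow> is_mult \<delta> (v S)"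
    and core_mult: "\<exists>x \<rho>. core_solution n v x \<rho> \<and> (\<forall>i\<in>players n. is_mult \<delta> (x i))"
    and p_support: "set_pmf p = {(i, S). i \<in> players n \<and> S \<subseteq> players n - {i}}"
    and a0_mult: "\<forall>i\<in>players n. is_mult \<delta> (a0 i)"
  shows "AE \<omega> in stream_space (measure_pmf p).
           \<exists>x \<rho>. core_solution n v x \<rho> \<and>
             (\<forall>\<^sub>F t in sequentially. env_state_eq n (cp_run v \<delta> a0 \<omega> t) x \<rho>)"
proof -
  interpret cp_game n v \<delta> a0
    using delta_pos v_mult a0_mult by unfold_locales
  obtain x \<rho> where x: "core_solution n v x \<rho>" "\<forall>i\<in>players n. is_mult \<delta> (x i)"
    using core_mult by blast
  have "set_pmf p = proposals n" by (simp add: p_support proposals_def)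
  from AE_eventually_absorbing[OF x this] show ?thesis
  proof (rule eventually_mono)
    fix \<omega> assume "\<exists>s\<in>{s. absorbing s}. \<forall>\<^sub>F t in sequentially. cp_run v \<delta> a0 \<omega> t = s"
    then obtain a C where "absorbing (a, C)"
      and "\<forall>\<^sub>F t in sequentially. cp_run v \<delta> a0 \<omega> t = (a, C)" by auto
    then have "\<forall>\<^sub>F t in sequentially.
        env_state_eq n (cp_run v \<delta> a0 \<omega> t) a {C i | i. i \<in> players n \<and> C i \<noteq> {}}"
      by (auto simp: env_state_eq_def elim: eventually_mono)
    with absorbing_core_solution[OF \<open>absorbing (a, C)\<close>] show "\<exists>x \<rho>. core_solution n v x \<rho> \<and>
        (\<forall>\<^sub>F t in sequentially. env_state_eq n (cp_run v \<delta> a0 \<omega> t) x \<rho>)" by blast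
  qed
qed

end
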